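(* For every positive integer $M$ there exists a temporal DAG whose underlying digraph is a transitive tournament, in which every temporal antichain has size at most $1$, but every temporal path cover and every temporally disjoint path cover has size at least $M$. In particular, temporal DAGs satisfy neither the Dilworth property nor the TD-Dilworth property, and the ratio between the minimum size of a temporal (disjoint) path cover and the maximum size of a temporal antichain is unbounded.
   Context: A temporal digraph is a pair $\mathcal D=(D,\lambda)$, where $D=(V,A)$ is a finite digraph (the underlying digraph) and $\lambda:A\to 2^{\{1,\dots,t_{\max}\}}$ assigns to each arc the set of time-steps (labels) at which it is active. A temporal DAG is a temporal digraph whose underlying digraph is acyclic. A temporal path is a sequence $(v_1,v_2,t_1),\dots,(v_{k-1},v_k,t_{k-1})$ with $v_1,\dots,v_k$ pairwise distinct, $\overrightarrow{v_iv_{i+1}}\in A$, $t_i\in\lambda(\overrightarrow{v_iv_{i+1}})$, and $t_1<\dots<t_{k-1}$; a single vertex is also a temporal path. It goes from $v_1$ to $v_k$. A path occupies $v_i$ ($1<i<k$) at every time in $\{t_{i-1},\dots,t_i\}$, $v_1$ at time $t_1$ and $v_k$ at time $t_{k-1}$; two temporal paths are temporally disjoint if they never occupy the same vertex at the same time. A temporal path cover is a collection of temporal paths whose vertex sets cover $V$; a temporally disjoint path cover is one whose paths are pairwise temporally disjoint. Two vertices are temporally connected if there is a temporal path from one to the other. A temporal antichain is a set of pairwise not temporally connected vertices. A class of temporal digraphs has the Dilworth property (resp. TD-Dilworth property) if for each member the minimum size of a temporal path cover (resp. temporally disjoint path cover) equals the maximum size of a temporal antichain. *)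

theory Defs
  imports Main
begin

definition temporal_digraph :: "'a set \<Rightarrow> ('a \<times> 'a) set \<Rightarrow> ('a \<times> 'a \<Rightarrow> nat set) \<Rightarrow> bool" where
  "temporal_digraph V A lam \<longleftrightarrow> finite V \<and> A \<subseteq> V \<times> V \<and>
     (\<exists>tmax::nat. \<forall>a\<in>A. lam a \<subseteq> {1..tmax})"

definition temporal_DAG :: "'a set \<Rightarrow> ('a \<times> 'a) set \<Rightarrow> ('a \<times> 'a \<Rightarrow> nat set) \<Rightarrow> bool" where
  "temporal_DAG V A lam \<longleftrightarrow> temporal_digraph V A lam \<and> acyclic A"

definition transitive_tournament :: "'a set \<Rightarrow> ('a \<times> 'a) set \<Rightarrow> bool" where
  "transitive_tournament V A \<longleftrightarrow> A \<subseteq> V \<times> V \<and> (\<forall>v. (v, v) \<notin> A) \<and>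
     (\<forall>u\<in>V. \<forall>v\<in>V. u \<noteq> v \<longrightarrow> ((u, v) \<in> A \<longleftrightarrow> (v, u) \<notin> A)) \<and> trans A"

definition temporal_path :: "'a set \<Rightarrow> ('a \<times> 'a) set \<Rightarrow> ('a \<times> 'a \<Rightarrow> nat set) \<Rightarrow> 'a list \<times> nat list \<Rightarrow> bool" where
  "temporal_path V A lam p \<longleftrightarrow> (case p of (vs, ts) \<Rightarrow>
     vs \<noteq> [] \<and> set vs \<subseteq> V \<and> distinct vs \<and> length ts + 1 = length vs \<and>
     (\<forall>i < length ts. (vs ! i, vs ! Suc i) \<in> A \<and> ts ! i \<in> lam (vs ! i, vs ! Suc i)) \<and>
     sorted_wrt (<) ts)"

definition path_vertices :: "'a list \<times> nat list \<Rightarrow> 'a set" where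
  "path_vertices p = set (fst p)"

definition temporally_connected :: "'a set \<Rightarrow> ('a \<times> 'a) set \<Rightarrow> ('a \<times> 'a \<Rightarrow> nat set) \<Rightarrow> 'a \<Rightarrow> 'a \<Rightarrow> bool" where
  "temporally_connected V A lam u v \<longleftrightarrow>
     (\<exists>p. temporal_path V A lam p \<and> hd (fst p) = u \<and> last (fst p) = v)"

definition temporal_antichain :: "'a set \<Rightarrow> ('a \<times> 'a) set \<Rightarrow> ('a \<times> 'a \<Rightarrow> nat set) \<Rightarrow> 'a set \<Rightarrow> bool" where
  "temporal_antichain V A lam S \<longleftrightarrow> S \<subseteq> V \<and>
     (\<forall>u\<in>S. \<forall>v\<in>S. u \<noteq> v \<longrightarrow> \<not> temporally_connected V A lam u v)"

text \<open>Occupation: the path occupies v_i (1<i<k) at all times t_{i-1}..t_i, v_1 at t_1 and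
v_k at t_{k-1}. A single-vertex path (k = 1) has no time-steps and occupies nothing.
Indices are 0-based below.\<close>

definition occupies :: "'a list \<times> nat list \<Rightarrow> 'a \<Rightarrow> nat \<Rightarrow> bool" where
  "occupies p v t \<longleftrightarrow> (case p of (vs, ts) \<Rightarrow>
     (\<exists>i < length vs. vs ! i = v \<and> length vs \<ge> 2 \<and>
        (if i = 0 then t = ts ! 0
         else if i = length vs - 1 then t = ts ! (length vs - 2)
         else ts ! (i - 1) \<le> t \<and> t \<le> ts ! i)))"

definition temporally_disjoint :: "'a list \<times> nat list \<Rightarrow> 'a list \<times> nat list \<Rightarrow> bool" where
  "temporally_disjoint p q \<longleftrightarrow> (\<forall>v t. \<not> (occupies p v t \<and> occupies q v t))"

definition temporal_path_cover :: "'a set \<Rightarrow> ('a \<times> 'a) set \<Rightarrow> ('a \<times> 'a \<Rightarrow> nat set) \<Rightarrow> ('a list \<times> nat list) set \<Rightarrow> bool" where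
  "temporal_path_cover V A lam P \<longleftrightarrow> (\<forall>p\<in>P. temporal_path V A lam p) \<and>
     (\<Union>p\<in>P. path_vertices p) = V"

definition TD_path_cover :: "'a set \<Rightarrow> ('a \<times> 'a) set \<Rightarrow> ('a \<times> 'a \<Rightarrow> nat set) \<Rightarrow> ('a list \<times> nat list) set \<Rightarrow> bool" where
  "TD_path_cover V A lam P \<longleftrightarrow> temporal_path_cover V A lam P \<and>
     (\<forall>p\<in>P. \<forall>q\<in>P. p \<noteq> q \<longrightarrow> temporally_disjoint p q)"

end

theory Submission
  imports Defs
begin

text \<open>Take the transitive tournament on 2M vertices and activate every arc only at time 1.
Any two vertices are joined by an arc, so no temporal antichain has two elements. But the
times along a temporal path strictly increase, so a path uses at most one arc and covers at
most two vertices; hence every temporal path cover needs at least M paths.\<close>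

lemma temporal_path_length_le:
  assumes "temporal_path V A lam (vs, ts)" and "\<forall>a\<in>A. lam a \<subseteq> T" and "finite T"
  shows "length vs \<le> card T + 1"
proof -
  have len: "length ts + 1 = length vs" and sorted: "sorted_wrt (<) ts"
    and labels: "\<forall>i < length ts. (vs ! i, vs ! Suc i) \<in> A \<and> ts ! i \<in> lam (vs ! i, vs ! Suc i)"
    using assms(1) unfolding temporal_path_def by auto
  have "set ts \<subseteq> T"
    using labels assms(2) by (fastforce simp: in_set_conv_nth)
  moreover have "distinct ts"
    using sorted by (simp add: strict_sorted_iff)
  ultimately have "length ts \<le> card T"
    using \<open>finite T\<close> by (metis card_mono distinct_card)
  then show ?thesis using len by simp
qed

lemma temporally_connected_arc:
  assumes "(u, v) \<in> A" and "u \<in> V" "v \<in> V" "u \<noteq> v" and "t \<in> lam (u, v)"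
  shows "temporally_connected V A lam u v"
  unfolding temporally_connected_def
  by (rule exI[of _ "([u, v], [t])"]) (use assms in \<open>auto simp: temporal_path_def\<close>)

lemma card_le_temporal_path_cover:
  assumes "finite P" and "temporal_path_cover V A lam P"
    and "\<forall>a\<in>A. lam a \<subseteq> T" and "finite T"
  shows "card V \<le> (card T + 1) * card P"
proof -
  have V: "V = (\<Union>p\<in>P. path_vertices p)" and paths: "\<forall>p\<in>P. temporal_path V A lam p"
    using assms(2) unfolding temporal_path_cover_def by auto
  have "card V \<le> (\<Sum>p\<in>P. card (path_vertices p))"
    unfolding V using card_UN_le[OF \<open>finite P\<close>] by blast
  also have "\<dots> \<le> (\<Sum>p\<in>P. card T + 1)"
  proof (rule sum_mono)
    fix p assume "p \<in> P"
    obtain vs ts where p: "p = (vs, ts)" by (cases p)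
    then have "length vs \<le> card T + 1"
      using paths \<open>p \<in> P\<close> temporal_path_length_le[OF _ assms(3,4)] by blast
    then show "card (path_vertices p) \<le> card T + 1"
      using card_length[of vs] by (simp add: path_vertices_def p)
  qed
  finally show ?thesis by (simp add: mult.commute)
qed

lemma temporal_antichain_card_le_1:
  assumes "transitive_tournament V A" and "finite V" and "\<forall>a\<in>A. lam a \<noteq> {}"
    and "temporal_antichain V A lam S"
  shows "card S \<le> 1"
proof -
  have "S \<subseteq> V"
    and unconnected: "\<forall>u\<in>S. \<forall>v\<in>S. u \<noteq> v \<longrightarrow> \<not> temporally_connected V A lam u v"
    using assms(4) unfolding temporal_antichain_def by auto
  have connected_if_arc: "temporally_connected V A lam u v"
    if "(u, v) \<in> A" "u \<in> V" "v \<in> V" "u \<noteq> v" for u v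
  proof -
    obtain t where "t \<in> lam (u, v)" using assms(3) \<open>(u, v) \<in> A\<close> by blast
    then show ?thesis by (rule temporally_connected_arc[OF that])
  qed
  have "u = v" if "u \<in> S" "v \<in> S" for u v
  proof (rule ccontr)
    assume "u \<noteq> v"
    have "u \<in> V" "v \<in> V" using that \<open>S \<subseteq> V\<close> by auto
    then have "(u, v) \<in> A \<or> (v, u) \<in> A"
      using assms(1) \<open>u \<noteq> v\<close> unfolding transitive_tournament_def by blast
    then have "temporally_connected V A lam u v \<or> temporally_connected V A lam v u"
      using connected_if_arc \<open>u \<in> V\<close> \<open>v \<in> V\<close> \<open>u \<noteq> v\<close> by auto
    moreover have "\<not> temporally_connected V A lam u v" "\<not> temporally_connected V A lam v u"
      using unconnected that \<open>u \<noteq> v\<close> by auto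
    ultimately show False by blast
  qed
  moreover have "finite S" using \<open>S \<subseteq> V\<close> \<open>finite V\<close> by (rule finite_subset)
  ultimately show ?thesis by (simp add: card_le_Suc0_iff_eq)
qed

definition less_arcs :: "nat \<Rightarrow> (nat \<times> nat) set" where
  "less_arcs n = {(i, j). i < j \<and> j < n}"

lemma transitive_tournament_less_arcs: "transitive_tournament {..<n} (less_arcs n)"
  unfolding transitive_tournament_def less_arcs_def trans_def by auto

lemma acyclic_less_arcs: "acyclic (less_arcs n)"
proof -
  have "trans (less_arcs n)"
    using transitive_tournament_less_arcs unfolding transitive_tournament_def by blast
  then have "(less_arcs n)\<^sup>+ = less_arcs n" by simp
  then show ?thesis unfolding acyclic_def less_arcs_def by auto
qed

theorem mainTheorem2:
  fixes M :: nat
  assumes "M \<ge> 1"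
  shows "\<exists>(V :: nat set) A lam.
           temporal_DAG V A lam \<and> transitive_tournament V A \<and>
           (\<forall>S. temporal_antichain V A lam S \<longrightarrow> card S \<le> 1) \<and>
           (\<forall>P. finite P \<and> temporal_path_cover V A lam P \<longrightarrow> card P \<ge> M) \<and>
           (\<forall>P. finite P \<and> TD_path_cover V A lam P \<longrightarrow> card P \<ge> M)"
proof -
  define V :: "nat set" where "V = {..<2 * M}"
  define A where "A = less_arcs (2 * M)"
  define lam :: "nat \<times> nat \<Rightarrow> nat set" where "lam = (\<lambda>_. {1})"
  have tournament: "transitive_tournament V A"
    unfolding V_def A_def by (rule transitive_tournament_less_arcs)
  have "temporal_DAG V A lam"
    using tournament acyclic_less_arcs
    unfolding temporal_DAG_def temporal_digraph_def transitive_tournament_def V_def A_def lam_def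
    by auto
  moreover have "\<forall>S. temporal_antichain V A lam S \<longrightarrow> card S \<le> 1"
    using temporal_antichain_card_le_1[OF tournament, of lam] by (simp add: V_def lam_def)
  moreover have cover: "\<forall>P. finite P \<and> temporal_path_cover V A lam P \<longrightarrow> card P \<ge> M"
  proof (intro allI impI)
    fix P assume "finite P \<and> temporal_path_cover V A lam P"
    then have "card V \<le> (card {1::nat} + 1) * card P"
      by (intro card_le_temporal_path_cover) (auto simp: lam_def)
    then show "card P \<ge> M" by (simp add: V_def)
  qed
  moreover have "\<forall>P. finite P \<and> TD_path_cover V A lam P \<longrightarrow> card P \<ge> M"
    using cover unfolding TD_path_cover_def by blast
  ultimately show ?thesis using tournament by blast
qed

end
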